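(* Let $G$ be a locally compact group with identity $e$ and $1<p<\infty$. Let $J$ be a closed ideal in $B_p(G)$ such that there exists $u\in J$ with $u(e)\neq 0$. Then $TIMB^*_p(G)\subseteq J^{\perp\perp}$, where $J^{\perp}=\{T\in B_p(G)^*: T|_J=0\}$ and $J^{\perp\perp}=\{F\in B_p(G)^{**}: F|_{J^\perp}=0\}$.
   Context: For $1<p<\infty$ and $\frac1p+\frac1q=1$, the Herz algebra $A_p(G)$ is the space of functions $u=\sum_{i=1}^\infty g_i*f_i^{\vee}$ with $f_i\in L^p(G)$, $g_i\in L^q(G)$, $\sum_i\|f_i\|_p\|g_i\|_q<\infty$, where $f^\vee(x)=f(x^{-1})$ and convolution is with respect to a left Haar measure; it is a commutative Banach algebra under pointwise multiplication with norm $\|u\|_{A_p}=\inf\sum_i\|f_i\|_p\|g_i\|_q$. $B_p(G)$ is the set of bounded continuous functions $u$ on $G$ with $uv\in A_p(G)$ for all $v\in A_p(G)$, normed by $\|u\|=\sup\{\|uv\|_{A_p}:\|v\|_{A_p}\le 1\}$; it is a commutative Banach algebra under pointwise multiplication. $I\in B_p(G)^*$ is $I(u)=u(e)$. Module actions: for $\phi\in B_p(G)^*$, $u\in B_p(G)$, $(\phi u)(v)=\phi(uv)$; for $F\in B_p(G)^{**}$, $(uF)(\phi)=F(\phi u)$. $TIMB^*_p(G)$ (topological invariant means on $B_p(G)^*$) is the set of $F\in B_p(G)^{**}$ with $\|F\|=F(I)=1$ and $uF=u(e)F$ for all $u\in B_p(G)$. *)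

theory Defs
  imports "HOL-Analysis.Analysis"
begin

text \<open>The locally compact group G is a type 'a of class topological_group_add
(written additively, not necessarily commutative): identity e = 0, inverse
x^{-1} = - x, product x y = x + y.\<close>

definition lc_group :: "'a::{topological_group_add, t2_space} itself \<Rightarrow> bool" where
  "lc_group T \<longleftrightarrow> locally_compact_space (euclidean :: 'a topology)"

definition left_haar :: "'a::{topological_group_add, t2_space} measure \<Rightarrow> bool" where
  "left_haar \<mu> \<longleftrightarrow>
     sets \<mu> = sets borel \<and>
     (\<forall>x. \<forall>A \<in> sets borel. emeasure \<mu> ((\<lambda>y. x + y) ` A) = emeasure \<mu> A) \<and>
     (\<forall>K. compact K \<longrightarrow> emeasure \<mu> K < \<infinity>) \<and>
     (\<forall>U. open U \<and> U \<noteq> {} \<longrightarrow> emeasure \<mu> U > 0) \<and>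
     (\<forall>A \<in> sets borel. emeasure \<mu> A = (INF U \<in> {U. open U \<and> A \<subseteq> U}. emeasure \<mu> U)) \<and>
     (\<forall>U. open U \<longrightarrow> emeasure \<mu> U = (SUP K \<in> {K. compact K \<and> K \<subseteq> U}. emeasure \<mu> K))"

definition conj_exp :: "real \<Rightarrow> real" where
  "conj_exp p = p / (p - 1)"

definition Lp :: "'a measure \<Rightarrow> real \<Rightarrow> ('a \<Rightarrow> complex) set" where
  "Lp \<mu> p = {f. f \<in> borel_measurable \<mu> \<and> integrable \<mu> (\<lambda>x. norm (f x) powr p)}"

definition Lp_norm :: "'a measure \<Rightarrow> real \<Rightarrow> ('a \<Rightarrow> complex) \<Rightarrow> real" where
  "Lp_norm \<mu> p f = (\<integral>x. norm (f x) powr p \<partial>\<mu>) powr (1 / p)"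

text \<open>(g * f^\<or>)(x) = \<integral> g(y) f^\<or>(y^{-1} x) dy = \<integral> g(y) f(x^{-1} y) dy\<close>
definition conv_check :: "'a::group_add measure \<Rightarrow> ('a \<Rightarrow> complex) \<Rightarrow> ('a \<Rightarrow> complex) \<Rightarrow> 'a \<Rightarrow> complex" where
  "conv_check \<mu> g f x = (\<integral>y. g y * f (- x + y) \<partial>\<mu>)"

definition Ap_rep :: "'a::group_add measure \<Rightarrow> real \<Rightarrow> (nat \<Rightarrow> 'a \<Rightarrow> complex) \<Rightarrow> (nat \<Rightarrow> 'a \<Rightarrow> complex) \<Rightarrow> ('a \<Rightarrow> complex) \<Rightarrow> bool" where
  "Ap_rep \<mu> p f g u \<longleftrightarrow>
     (\<forall>i. f i \<in> Lp \<mu> p \<and> g i \<in> Lp \<mu> (conj_exp p)) \<and>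
     summable (\<lambda>i. Lp_norm \<mu> p (f i) * Lp_norm \<mu> (conj_exp p) (g i)) \<and>
     (\<forall>x. (\<lambda>i. conv_check \<mu> (g i) (f i) x) sums u x)"

definition Ap :: "'a::group_add measure \<Rightarrow> real \<Rightarrow> ('a \<Rightarrow> complex) set" where
  "Ap \<mu> p = {u. \<exists>f g. Ap_rep \<mu> p f g u}"

definition Ap_norm :: "'a::group_add measure \<Rightarrow> real \<Rightarrow> ('a \<Rightarrow> complex) \<Rightarrow> real" where
  "Ap_norm \<mu> p u = Inf {(\<Sum>i. Lp_norm \<mu> p (f i) * Lp_norm \<mu> (conj_exp p) (g i)) | f g. Ap_rep \<mu> p f g u}"

definition Bp :: "'a::{topological_group_add, t2_space} measure \<Rightarrow> real \<Rightarrow> ('a \<Rightarrow> complex) set" where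
  "Bp \<mu> p = {u. continuous_on UNIV u \<and> bounded (range u) \<and>
                (\<forall>v \<in> Ap \<mu> p. (\<lambda>x. u x * v x) \<in> Ap \<mu> p)}"

definition Bp_norm :: "'a::{topological_group_add, t2_space} measure \<Rightarrow> real \<Rightarrow> ('a \<Rightarrow> complex) \<Rightarrow> real" where
  "Bp_norm \<mu> p u = Sup {Ap_norm \<mu> p (\<lambda>x. u x * v x) | v. v \<in> Ap \<mu> p \<and> Ap_norm \<mu> p v \<le> 1}"

text \<open>The dual B_p(G)^*: bounded linear functionals on B_p(G), represented
extensionally (value 0 outside B_p(G)), so that functionals are determined by
their values on B_p(G).\<close>
definition Bp_dual :: "'a::{topological_group_add, t2_space} measure \<Rightarrow> real \<Rightarrow> (('a \<Rightarrow> complex) \<Rightarrow> complex) set" where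
  "Bp_dual \<mu> p = {\<phi>. (\<forall>v. v \<notin> Bp \<mu> p \<longrightarrow> \<phi> v = 0) \<and>
      (\<forall>u \<in> Bp \<mu> p. \<forall>v \<in> Bp \<mu> p. \<phi> (\<lambda>x. u x + v x) = \<phi> u + \<phi> v) \<and>
      (\<forall>c. \<forall>u \<in> Bp \<mu> p. \<phi> (\<lambda>x. c * u x) = c * \<phi> u) \<and>
      (\<exists>C. \<forall>u \<in> Bp \<mu> p. norm (\<phi> u) \<le> C * Bp_norm \<mu> p u)}"

definition dual_norm :: "'a::{topological_group_add, t2_space} measure \<Rightarrow> real \<Rightarrow> (('a \<Rightarrow> complex) \<Rightarrow> complex) \<Rightarrow> real" where
  "dual_norm \<mu> p \<phi> = Sup {norm (\<phi> u) | u. u \<in> Bp \<mu> p \<and> Bp_norm \<mu> p u \<le> 1}"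

definition Bp_bidual :: "'a::{topological_group_add, t2_space} measure \<Rightarrow> real \<Rightarrow> ((('a \<Rightarrow> complex) \<Rightarrow> complex) \<Rightarrow> complex) set" where
  "Bp_bidual \<mu> p = {F. (\<forall>\<phi>. \<phi> \<notin> Bp_dual \<mu> p \<longrightarrow> F \<phi> = 0) \<and>
      (\<forall>\<phi> \<in> Bp_dual \<mu> p. \<forall>\<psi> \<in> Bp_dual \<mu> p. F (\<lambda>v. \<phi> v + \<psi> v) = F \<phi> + F \<psi>) \<and>
      (\<forall>c. \<forall>\<phi> \<in> Bp_dual \<mu> p. F (\<lambda>v. c * \<phi> v) = c * F \<phi>) \<and>
      (\<exists>C. \<forall>\<phi> \<in> Bp_dual \<mu> p. norm (F \<phi>) \<le> C * dual_norm \<mu> p \<phi>)}"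

definition bidual_norm :: "'a::{topological_group_add, t2_space} measure \<Rightarrow> real \<Rightarrow> ((('a \<Rightarrow> complex) \<Rightarrow> complex) \<Rightarrow> complex) \<Rightarrow> real" where
  "bidual_norm \<mu> p F = Sup {norm (F \<phi>) | \<phi>. \<phi> \<in> Bp_dual \<mu> p \<and> dual_norm \<mu> p \<phi> \<le> 1}"

definition eval_e :: "'a::{topological_group_add, t2_space} measure \<Rightarrow> real \<Rightarrow> ('a \<Rightarrow> complex) \<Rightarrow> complex" where
  "eval_e \<mu> p = (\<lambda>v. if v \<in> Bp \<mu> p then v 0 else 0)"

definition dual_act :: "'a::{topological_group_add, t2_space} measure \<Rightarrow> real \<Rightarrow> (('a \<Rightarrow> complex) \<Rightarrow> complex) \<Rightarrow> ('a \<Rightarrow> complex) \<Rightarrow> (('a \<Rightarrow> complex) \<Rightarrow> complex)" where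
  "dual_act \<mu> p \<phi> u = (\<lambda>v. if v \<in> Bp \<mu> p then \<phi> (\<lambda>x. u x * v x) else 0)"

definition bidual_act :: "'a::{topological_group_add, t2_space} measure \<Rightarrow> real \<Rightarrow> ('a \<Rightarrow> complex) \<Rightarrow> ((('a \<Rightarrow> complex) \<Rightarrow> complex) \<Rightarrow> complex) \<Rightarrow> ((('a \<Rightarrow> complex) \<Rightarrow> complex) \<Rightarrow> complex)" where
  "bidual_act \<mu> p u F = (\<lambda>\<phi>. F (dual_act \<mu> p \<phi> u))"

definition TIMB :: "'a::{topological_group_add, t2_space} measure \<Rightarrow> real \<Rightarrow> ((('a \<Rightarrow> complex) \<Rightarrow> complex) \<Rightarrow> complex) set" where
  "TIMB \<mu> p = {F. F \<in> Bp_bidual \<mu> p \<and> bidual_norm \<mu> p F = 1 \<and> F (eval_e \<mu> p) = 1 \<and>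
      (\<forall>u \<in> Bp \<mu> p. \<forall>\<phi> \<in> Bp_dual \<mu> p. bidual_act \<mu> p u F \<phi> = u 0 * F \<phi>)}"

definition closed_ideal_Bp :: "'a::{topological_group_add, t2_space} measure \<Rightarrow> real \<Rightarrow> ('a \<Rightarrow> complex) set \<Rightarrow> bool" where
  "closed_ideal_Bp \<mu> p J \<longleftrightarrow> J \<subseteq> Bp \<mu> p \<and> (\<lambda>x. 0) \<in> J \<and>
     (\<forall>u \<in> J. \<forall>v \<in> J. (\<lambda>x. u x + v x) \<in> J) \<and>
     (\<forall>c. \<forall>u \<in> J. (\<lambda>x. c * u x) \<in> J) \<and>
     (\<forall>u \<in> Bp \<mu> p. \<forall>v \<in> J. (\<lambda>x. u x * v x) \<in> J) \<and>
     (\<forall>u \<in> Bp \<mu> p. (\<forall>\<epsilon>>0. \<exists>v \<in> J. Bp_norm \<mu> p (\<lambda>x. u x - v x) < \<epsilon>) \<longrightarrow> u \<in> J)"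

definition annihilator :: "'a::{topological_group_add, t2_space} measure \<Rightarrow> real \<Rightarrow> ('a \<Rightarrow> complex) set \<Rightarrow> (('a \<Rightarrow> complex) \<Rightarrow> complex) set" where
  "annihilator \<mu> p J = {T \<in> Bp_dual \<mu> p. \<forall>u \<in> J. T u = 0}"

definition biannihilator :: "'a::{topological_group_add, t2_space} measure \<Rightarrow> real \<Rightarrow> ('a \<Rightarrow> complex) set \<Rightarrow> ((('a \<Rightarrow> complex) \<Rightarrow> complex) \<Rightarrow> complex) set" where
  "biannihilator \<mu> p J = {F \<in> Bp_bidual \<mu> p. \<forall>T \<in> annihilator \<mu> p J. F T = 0}"

end

theory Submission
  imports Defs
begin

text \<open>Pick \<open>u \<in> J\<close> with \<open>u(e) \<noteq> 0\<close>. For \<open>T \<in> J\<^sup>\<perp>\<close> the functional \<open>T u\<close> vanishes, since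
\<open>J\<close> is an ideal; topological invariance of \<open>F\<close> then gives \<open>u(e) F(T) = (u F)(T) = F(T u) = F(0) = 0\<close>.\<close>

lemma zero_in_Bp_dual: "(\<lambda>v. 0) \<in> Bp_dual \<mu> p"
  unfolding Bp_dual_def by (auto intro!: exI[of _ 0])

lemma Bp_bidual_zero:
  assumes "F \<in> Bp_bidual \<mu> p"
  shows "F (\<lambda>v. 0) = 0"
proof -
  have "\<forall>c. \<forall>\<phi> \<in> Bp_dual \<mu> p. F (\<lambda>v. c * \<phi> v) = c * F \<phi>"
    using assms unfolding Bp_bidual_def by blast
  then have "F (\<lambda>v. 0 * (\<lambda>v. 0) v) = 0 * F (\<lambda>v. 0)"
    using zero_in_Bp_dual by (rule bspec[OF spec[of _ 0]])
  then show ?thesis by simp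
qed

lemma dual_act_annihilator:
  assumes "closed_ideal_Bp \<mu> p J" and "T \<in> annihilator \<mu> p J" and "u \<in> J"
  shows "dual_act \<mu> p T u = (\<lambda>v. 0)"
proof
  fix v
  show "dual_act \<mu> p T u v = 0"
  proof (cases "v \<in> Bp \<mu> p")
    case True
    then have "(\<lambda>x. v x * u x) \<in> J"
      using assms(1,3) unfolding closed_ideal_Bp_def by blast
    then have "T (\<lambda>x. u x * v x) = 0"
      using assms(2) unfolding annihilator_def by (simp add: mult.commute)
    with True show ?thesis unfolding dual_act_def by simp
  qed (simp add: dual_act_def)
qed

lemma TIMB_vanishes_on_dual_act_kernel:
  assumes F: "F \<in> TIMB \<mu> p" and u: "u \<in> Bp \<mu> p" "u 0 \<noteq> 0"
    and T: "T \<in> Bp_dual \<mu> p" "dual_act \<mu> p T u = (\<lambda>v. 0)"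
  shows "F T = 0"
proof -
  have "u 0 * F T = bidual_act \<mu> p u F T"
    using F u T unfolding TIMB_def by simp
  also have "\<dots> = F (\<lambda>v. 0)"
    using T unfolding bidual_act_def by simp
  also have "\<dots> = 0"
    using F unfolding TIMB_def by (blast intro: Bp_bidual_zero)
  finally show ?thesis using u by simp
qed

theorem theorem3p5:
  fixes \<mu> :: "'a::{topological_group_add, t2_space} measure"
    and p :: real and J :: "('a \<Rightarrow> complex) set"
  assumes "lc_group TYPE('a)"
    and "left_haar \<mu>"
    and "1 < p"
    and "closed_ideal_Bp \<mu> p J"
    and "\<exists>u \<in> J. u 0 \<noteq> 0"
  shows "TIMB \<mu> p \<subseteq> biannihilator \<mu> p J"
proof
  fix F assume F: "F \<in> TIMB \<mu> p"
  obtain u where u: "u \<in> J" "u 0 \<noteq> 0" using assms(5) by blast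
  have uB: "u \<in> Bp \<mu> p" using assms(4) u(1) unfolding closed_ideal_Bp_def by blast
  have "F T = 0" if T: "T \<in> annihilator \<mu> p J" for T
    using TIMB_vanishes_on_dual_act_kernel[OF F uB u(2)]
      dual_act_annihilator[OF assms(4) T u(1)] T
    unfolding annihilator_def by blast
  with F show "F \<in> biannihilator \<mu> p J"
    unfolding biannihilator_def TIMB_def by blast
qed

end
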